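(* Let $U_\alpha=gE_\alpha g^{-1}$ ($1\le\alpha\le r$) with $g\in G_{<0}$ and $W_\beta=XE_\beta z^{-1}X^{-1}$ ($1\le\beta\le r$) with $X\in G_{\geqslant0}$. Set $B_{m\alpha}:=\pi_{\geqslant0}(U_\alpha z^m)$ ($m\ge0$) and $C_{m\beta}:=\pi_{<0}(W_\beta z^{m+1})$ ($m<0$), and assume that for all $\alpha_1,\alpha_2,\beta_1,\beta_2$: $\partial_{m_1\beta_1}(B_{m_2\alpha_2})-\partial_{m_2\alpha_2}(C_{m_1\beta_1})-[C_{m_1\beta_1},B_{m_2\alpha_2}]=0$ for $m_1<0\le m_2$; $\partial_{m_1\alpha_1}(B_{m_2\alpha_2})-\partial_{m_2\alpha_2}(B_{m_1\alpha_1})-[B_{m_1\alpha_1},B_{m_2\alpha_2}]=0$ for $m_1,m_2\ge0$; $\partial_{m_1\beta_1}(C_{m_2\beta_2})-\partial_{m_2\beta_2}(C_{m_1\beta_1})-[C_{m_1\beta_1},C_{m_2\beta_2}]=0$ for $m_1,m_2<0$. Then $(\{U_\alpha\},\{W_\beta\})$ is a solution of the combined $(\mathrm{sl}_n(\mathbb{C}),\mathfrak{t})$-hierarchy.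
   Context: $R$ is a commutative $\mathbb{C}$-algebra with commuting $\mathbb{C}$-linear derivations $\partial_{m\alpha}$, $m\in\mathbb{Z}$, $1\le\alpha\le r$, acting coefficientwise on matrices and on series. $\mathrm{gl}_n(R)[z,z^{-1})$ consists of formal series $\sum_{i=-\infty}^{N}X_iz^i$ and $\mathrm{gl}_n(R)[z^{-1},z)$ of formal series $\sum_{i=-N}^{\infty}X_iz^i$ ($X_i\in\mathrm{gl}_n(R)$), with bracket $[X,Y]=\sum[X_i,Y_j]z^{i+j}$. $\pi_{\geqslant0}$ (resp. $\pi_{<0}$) keeps the terms with $i\ge0$ (resp. $i<0$). $\mathfrak{t}\subset\mathrm{sl}_n(\mathbb{C})$ is commutative of maximal dimension $r$, basis $E_1,\dots,E_r$. $G_{<0}=\{\mathrm{Id}+\sum_{i\ge1}Y_iz^{-i}\mid Y_i\in\mathrm{gl}_n(R)\}$; $G_{\geqslant0}=\{X_0+\sum_{i\ge1}X_iz^i\mid X_i\in\mathrm{gl}_n(R),\ X_0\text{ invertible}\}$. $(\{U_\alpha\},\{W_\beta\})$ is a solution of the combined $(\mathrm{sl}_n(\mathbb{C}),\mathfrak{t})$-hierarchy if: for all $m\ge0$ and all $\alpha_1,\alpha_2,\beta$: $\partial_{m\alpha_1}(U_{\alpha_2})=[\pi_{\geqslant0}(U_{\alpha_1}z^m),U_{\alpha_2}]$ and $\partial_{m\alpha_1}(W_\beta)=[\pi_{\geqslant0}(U_{\alpha_1}z^m),W_\beta]$; and for all $m<0$ and all $\beta_1,\beta_2,\alpha$: $\partial_{m\beta_1}(W_{\beta_2})=[\pi_{<0}(W_{\beta_1}z^{m+1}),W_{\beta_2}]$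 and $\partial_{m\beta_1}(U_\alpha)=[\pi_{<0}(W_{\beta_1}z^{m+1}),U_\alpha]$. *)

theory Defs
  imports "HOL-Analysis.Analysis" "HOL-Library.Function_Algebras"
begin

text \<open>Matrices over R are 'r^'n^'n (n = CARD('n)). A formal series
  sum_i X_i z^i is a function int => matrix; the two series spaces are singled out
  by support conditions.\<close>

type_synonym ('r, 'n) series = "int \<Rightarrow> 'r^'n^'n"

definition bdd_above_series :: "('r::zero, 'n::finite) series \<Rightarrow> bool" where
  "bdd_above_series X \<longleftrightarrow> (\<exists>N. \<forall>i>N. X i = 0)"

definition bdd_below_series :: "('r::zero, 'n::finite) series \<Rightarrow> bool" where
  "bdd_below_series X \<longleftrightarrow> (\<exists>N. \<forall>i<N. X i = 0)"

text \<open>The sum is taken over the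
  indices with nonzero contributions; for two series in the same space (or one of them
  a Laurent polynomial) this set is finite and the formula is the usual product.\<close>
definition smul :: "('r::comm_ring_1, 'n::finite) series \<Rightarrow> ('r, 'n) series \<Rightarrow> ('r, 'n) series" where
  "smul X Y = (\<lambda>k. \<Sum>i\<in>{i. X i \<noteq> 0 \<and> Y (k - i) \<noteq> 0}. X i ** Y (k - i))"

definition sbracket :: "('r::comm_ring_1, 'n::finite) series \<Rightarrow> ('r, 'n) series \<Rightarrow> ('r, 'n) series" where
  "sbracket X Y = smul X Y - smul Y X"

definition smonom :: "'r::zero^'n::finite^'n \<Rightarrow> int \<Rightarrow> ('r, 'n) series" where
  "smonom A k = (\<lambda>i. if i = k then A else 0)"

definition zshift :: "int \<Rightarrow> ('r::zero, 'n::finite) series \<Rightarrow> ('r, 'n) series" where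
  "zshift m X = (\<lambda>i. X (i - m))"

definition pi_ge0 :: "('r::zero, 'n::finite) series \<Rightarrow> ('r, 'n) series" where
  "pi_ge0 X = (\<lambda>i. if 0 \<le> i then X i else 0)"

definition pi_lt0 :: "('r::zero, 'n::finite) series \<Rightarrow> ('r, 'n) series" where
  "pi_lt0 X = (\<lambda>i. if i < 0 then X i else 0)"

definition sder :: "('r \<Rightarrow> 'r) \<Rightarrow> ('r::zero, 'n::finite) series \<Rightarrow> ('r, 'n) series" where
  "sder d X = (\<lambda>i. \<chi> a b. d (X i $ a $ b))"

definition G_lt0 :: "('r::comm_ring_1, 'n::finite) series \<Rightarrow> bool" where
  "G_lt0 g \<longleftrightarrow> (\<forall>i>0. g i = 0) \<and> g 0 = mat 1"

definition G_ge0 :: "('r::comm_ring_1, 'n::finite) series \<Rightarrow> bool" where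
  "G_ge0 X \<longleftrightarrow> (\<forall>i<0. X i = 0) \<and> invertible (X 0)"

definition calg_hom :: "(complex \<Rightarrow> 'r::comm_ring_1) \<Rightarrow> bool" where
  "calg_hom emb \<longleftrightarrow> emb 1 = 1 \<and> (\<forall>a b. emb (a + b) = emb a + emb b) \<and>
     (\<forall>a b. emb (a * b) = emb a * emb b)"

definition commuting_C_derivations ::
  "(complex \<Rightarrow> 'r::comm_ring_1) \<Rightarrow> nat \<Rightarrow> (int \<Rightarrow> nat \<Rightarrow> 'r \<Rightarrow> 'r) \<Rightarrow> bool" where
  "commuting_C_derivations emb r D \<longleftrightarrow>
     (\<forall>m. \<forall>a\<in>{1..r}.
        (\<forall>x y. D m a (x + y) = D m a x + D m a y) \<and>
        (\<forall>c x. D m a (emb c * x) = emb c * D m a x) \<and>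
        (\<forall>x y. D m a (x * y) = x * D m a y + D m a x * y)) \<and>
     (\<forall>m1 m2. \<forall>a1\<in>{1..r}. \<forall>a2\<in>{1..r}. \<forall>x. D m1 a1 (D m2 a2 x) = D m2 a2 (D m1 a1 x))"

definition embm :: "(complex \<Rightarrow> 'r) \<Rightarrow> complex^'n::finite^'n \<Rightarrow> 'r^'n^'n" where
  "embm emb A = (\<chi> i j. emb (A $ i $ j))"

definition lin_indep_C :: "'i set \<Rightarrow> ('i \<Rightarrow> complex^'n::finite^'n) \<Rightarrow> bool" where
  "lin_indep_C I M \<longleftrightarrow> (\<forall>c. (\<Sum>i\<in>I. mat (c i) ** M i) = 0 \<longrightarrow> (\<forall>i\<in>I. c i = 0))"

text \<open>t = span{E_1..E_r} is a commutative subalgebra of sl_n(C) with basis E_1..E_r,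
  and r is the maximal dimension of a commutative subalgebra of sl_n(C)
  (dimension written out as size of a linearly independent commuting family).\<close>
definition max_comm_basis :: "nat \<Rightarrow> (nat \<Rightarrow> complex^'n::finite^'n) \<Rightarrow> bool" where
  "max_comm_basis r E \<longleftrightarrow>
     (\<forall>a\<in>{1..r}. trace (E a) = 0) \<and>
     (\<forall>a\<in>{1..r}. \<forall>b\<in>{1..r}. E a ** E b = E b ** E a) \<and>
     lin_indep_C {1..r} E \<and>
     (\<forall>(I::nat set) (M::nat \<Rightarrow> complex^'n^'n). finite I \<longrightarrow> (\<forall>i\<in>I. trace (M i) = 0) \<longrightarrow>
        (\<forall>i\<in>I. \<forall>j\<in>I. M i ** M j = M j ** M i) \<longrightarrow> lin_indep_C I M \<longrightarrow> card I \<le> r)"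

definition Bop :: "(nat \<Rightarrow> ('r::comm_ring_1, 'n::finite) series) \<Rightarrow> int \<Rightarrow> nat \<Rightarrow> ('r, 'n) series" where
  "Bop U m a = pi_ge0 (zshift m (U a))"

definition Cop :: "(nat \<Rightarrow> ('r::comm_ring_1, 'n::finite) series) \<Rightarrow> int \<Rightarrow> nat \<Rightarrow> ('r, 'n) series" where
  "Cop W m b = pi_lt0 (zshift (m + 1) (W b))"

definition combined_solution ::
  "nat \<Rightarrow> (int \<Rightarrow> nat \<Rightarrow> 'r::comm_ring_1 \<Rightarrow> 'r) \<Rightarrow> (nat \<Rightarrow> ('r, 'n::finite) series)
     \<Rightarrow> (nat \<Rightarrow> ('r, 'n) series) \<Rightarrow> bool" where
  "combined_solution r D U W \<longleftrightarrow>
     (\<forall>m\<ge>0. \<forall>a1\<in>{1..r}. \<forall>a2\<in>{1..r}.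
        sder (D m a1) (U a2) = sbracket (pi_ge0 (zshift m (U a1))) (U a2)) \<and>
     (\<forall>m\<ge>0. \<forall>a1\<in>{1..r}. \<forall>b\<in>{1..r}.
        sder (D m a1) (W b) = sbracket (pi_ge0 (zshift m (U a1))) (W b)) \<and>
     (\<forall>m<0. \<forall>b1\<in>{1..r}. \<forall>b2\<in>{1..r}.
        sder (D m b1) (W b2) = sbracket (pi_lt0 (zshift (m + 1) (W b1))) (W b2)) \<and>
     (\<forall>m<0. \<forall>b1\<in>{1..r}. \<forall>a\<in>{1..r}.
        sder (D m b1) (U a) = sbracket (pi_lt0 (zshift (m + 1) (W b1))) (U a))"

end

theory Submission
  imports Defs
begin

text \<open>Write \<open>L\<^sub>i = z^m\<^sub>i U\<^sub>i = B\<^sub>i + P\<^sub>i\<close> with \<open>B\<^sub>i = \<pi>_{\<ge>0} L\<^sub>i\<close>. Because the \<open>U\<^sub>\<alpha>\<close> commute,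
  \<open>\<pi>_{\<ge>0} [B\<^sub>1, L\<^sub>2] + \<pi>_{\<ge>0} [L\<^sub>1, B\<^sub>2] = [B\<^sub>1, B\<^sub>2]\<close>, so the zero-curvature equation for
  \<open>B\<^sub>1, B\<^sub>2\<close> says exactly that the shifted defects \<open>z^m\<^sub>2 (\<partial>U\<^sub>2 - [B\<^sub>1, U\<^sub>2])\<close> and
  \<open>z^m\<^sub>1 (\<partial>U\<^sub>1 - [B\<^sub>2, U\<^sub>1])\<close> have the same part of degree \<open>\<ge> 0\<close>. A defect has degree bounded
  independently of the flow, because \<open>[B, U] = -[P, U]\<close>; letting \<open>m\<^sub>2 \<rightarrow> \<infinity>\<close> therefore forces every
  coefficient of the first defect to vanish. In the mixed equations the two truncated defects
  lie in the complementary halves \<open>\<pi>_{\<ge>0}\<close> and \<open>\<pi>_{<0}\<close>, so both vanish. Substituting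
  \<open>z \<mapsto> z\<^sup>-\<^sup>1\<close> exchanges series bounded below with series bounded above and turns \<open>\<pi>_{<0}\<close>
  into the truncation at degree 1, which reduces the \<open>W\<close>-equations to the \<open>U\<close>-equations.\<close>

section \<open>Degree bounds and products of series\<close>

lemma matrix_add_rdistrib: "(B + C) ** A = B ** A + C ** A"
  by (vector matrix_matrix_mult_def sum.distrib[symmetric] field_simps)

lemma matrix_sum_mult:
  "finite S \<Longrightarrow> (\<Sum>i\<in>S. f i) ** (A::'a::semiring_1^'p^'n) = (\<Sum>i\<in>S. f i ** A)"
  by (induction S rule: finite_induct) (auto simp: matrix_add_rdistrib)

lemma matrix_mult_sum:
  "finite S \<Longrightarrow> (A::'a::semiring_1^'n^'m) ** (\<Sum>i\<in>S. f i) = (\<Sum>i\<in>S. A ** f i)"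
  by (induction S rule: finite_induct) (auto simp: matrix_add_ldistrib)

definition deg_le :: "int \<Rightarrow> ('r::zero, 'n::finite) series \<Rightarrow> bool" where
  "deg_le N X \<longleftrightarrow> (\<forall>i>N. X i = 0)"

definition ord_ge :: "int \<Rightarrow> ('r::zero, 'n::finite) series \<Rightarrow> bool" where
  "ord_ge N X \<longleftrightarrow> (\<forall>i<N. X i = 0)"

definition smul_terms :: "('r::zero, 'n::finite) series \<Rightarrow> ('r, 'n) series \<Rightarrow> int \<Rightarrow> int set" where
  "smul_terms X Y k = {i. X i \<noteq> 0 \<and> Y (k - i) \<noteq> 0}"

definition smul_finite :: "('r::zero, 'n::finite) series \<Rightarrow> ('r, 'n) series \<Rightarrow> bool" where
  "smul_finite X Y \<longleftrightarrow> (\<forall>k. finite (smul_terms X Y k))"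

lemma deg_le_mono: "deg_le a X \<Longrightarrow> a \<le> b \<Longrightarrow> deg_le b X"
  by (auto simp: deg_le_def)

lemma ord_ge_mono: "ord_ge a X \<Longrightarrow> b \<le> a \<Longrightarrow> ord_ge b X"
  by (auto simp: ord_ge_def)

lemma deg_le_smonom: "deg_le k (smonom A k)"
  by (auto simp: deg_le_def smonom_def)

lemma ord_ge_smonom: "ord_ge k (smonom A k)"
  by (auto simp: ord_ge_def smonom_def)

lemma deg_le_zshift: "deg_le N X \<Longrightarrow> deg_le (N + m) (zshift m X)"
  by (auto simp: deg_le_def zshift_def)

lemma ord_ge_zshift: "ord_ge N X \<Longrightarrow> ord_ge (N + m) (zshift m X)"
  by (auto simp: ord_ge_def zshift_def)

lemma deg_le_diff:
  fixes X Y :: "('r::ab_group_add, 'n::finite) series"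
  shows "deg_le N X \<Longrightarrow> deg_le N Y \<Longrightarrow> deg_le N (X - Y)"
  by (auto simp: deg_le_def)

lemma ord_ge_diff:
  fixes X Y :: "('r::ab_group_add, 'n::finite) series"
  shows "ord_ge N X \<Longrightarrow> ord_ge N Y \<Longrightarrow> ord_ge N (X - Y)"
  by (auto simp: ord_ge_def)

lemma deg_le_sder: "d 0 = 0 \<Longrightarrow> deg_le N X \<Longrightarrow> deg_le N (sder d X)"
  by (auto simp: deg_le_def sder_def vec_eq_iff)

lemma smul_eq_sum:
  fixes X Y :: "('r::comm_ring_1, 'n::finite) series"
  assumes "finite S" "smul_terms X Y k \<subseteq> S"
  shows "smul X Y k = (\<Sum>i\<in>S. X i ** Y (k - i))"
  unfolding smul_def
  by (rule sum.mono_neutral_left[OF assms(1)]) (use assms(2) in \<open>auto simp: smul_terms_def\<close>)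

lemma smul_terms_deg_le: "deg_le a X \<Longrightarrow> deg_le b Y \<Longrightarrow> smul_terms X Y k \<subseteq> {k - b..a}"
  unfolding deg_le_def smul_terms_def by (auto simp: not_less[symmetric])

lemma smul_terms_ord_ge: "ord_ge a X \<Longrightarrow> ord_ge b Y \<Longrightarrow> smul_terms X Y k \<subseteq> {a..k - b}"
  unfolding ord_ge_def smul_terms_def by (auto simp: not_less[symmetric])

lemma smul_finite_deg_le: "deg_le a X \<Longrightarrow> deg_le b Y \<Longrightarrow> smul_finite X Y"
  unfolding smul_finite_def by (meson smul_terms_deg_le finite_atLeastAtMost_int finite_subset)

lemma smul_finite_ord_ge: "ord_ge a X \<Longrightarrow> ord_ge b Y \<Longrightarrow> smul_finite X Y"
  unfolding smul_finite_def by (meson smul_terms_ord_ge finite_atLeastAtMost_int finite_subset)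

lemma deg_le_smul: "deg_le a X \<Longrightarrow> deg_le b Y \<Longrightarrow> deg_le (a + b) (smul X Y)"
  unfolding deg_le_def smul_def by (force intro!: sum.neutral)

lemma ord_ge_smul: "ord_ge a X \<Longrightarrow> ord_ge b Y \<Longrightarrow> ord_ge (a + b) (smul X Y)"
  unfolding ord_ge_def smul_def by (force intro!: sum.neutral)

lemma deg_le_sbracket: "deg_le a X \<Longrightarrow> deg_le b Y \<Longrightarrow> deg_le (a + b) (sbracket X Y)"
  unfolding sbracket_def by (metis deg_le_diff deg_le_smul add.commute)

lemma ord_ge_sbracket: "ord_ge a X \<Longrightarrow> ord_ge b Y \<Longrightarrow> ord_ge (a + b) (sbracket X Y)"
  unfolding sbracket_def by (metis ord_ge_diff ord_ge_smul add.commute)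

lemma smul_add_left:
  fixes X Y Z :: "('r::comm_ring_1, 'n::finite) series"
  assumes "smul_finite X Z" "smul_finite Y Z"
  shows "smul (X + Y) Z = smul X Z + smul Y Z"
proof
  fix k
  let ?S = "smul_terms X Z k \<union> smul_terms Y Z k"
  have S: "finite ?S" using assms by (auto simp: smul_finite_def)
  have "smul (X + Y) Z k = (\<Sum>i\<in>?S. (X + Y) i ** Z (k - i))"
    by (rule smul_eq_sum[OF S]) (auto simp: smul_terms_def)
  also have "\<dots> = (\<Sum>i\<in>?S. X i ** Z (k - i)) + (\<Sum>i\<in>?S. Y i ** Z (k - i))"
    by (simp add: matrix_add_rdistrib sum.distrib)
  also have "\<dots> = smul X Z k + smul Y Z k"
    by (subst (1 2) smul_eq_sum[OF S]) auto
  finally show "smul (X + Y) Z k = (smul X Z + smul Y Z) k" by simp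
qed

lemma smul_add_right:
  fixes X Y Z :: "('r::comm_ring_1, 'n::finite) series"
  assumes "smul_finite Z X" "smul_finite Z Y"
  shows "smul Z (X + Y) = smul Z X + smul Z Y"
proof
  fix k
  let ?S = "smul_terms Z X k \<union> smul_terms Z Y k"
  have S: "finite ?S" using assms by (auto simp: smul_finite_def)
  have "smul Z (X + Y) k = (\<Sum>i\<in>?S. Z i ** (X + Y) (k - i))"
    by (rule smul_eq_sum[OF S]) (auto simp: smul_terms_def)
  also have "\<dots> = (\<Sum>i\<in>?S. Z i ** X (k - i)) + (\<Sum>i\<in>?S. Z i ** Y (k - i))"
    by (simp add: matrix_add_ldistrib sum.distrib)
  also have "\<dots> = smul Z X k + smul Z Y k"
    by (subst (1 2) smul_eq_sum[OF S]) auto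
  finally show "smul Z (X + Y) k = (smul Z X + smul Z Y) k" by simp
qed

lemma sbracket_add_left:
  fixes X Y Z :: "('r::comm_ring_1, 'n::finite) series"
  assumes "smul_finite X Z" "smul_finite Y Z" "smul_finite Z X" "smul_finite Z Y"
  shows "sbracket (X + Y) Z = sbracket X Z + sbracket Y Z"
  using assms by (simp add: sbracket_def smul_add_left smul_add_right algebra_simps)

lemma sbracket_add_right:
  fixes X Y Z :: "('r::comm_ring_1, 'n::finite) series"
  assumes "smul_finite X Z" "smul_finite Y Z" "smul_finite Z X" "smul_finite Z Y"
  shows "sbracket Z (X + Y) = sbracket Z X + sbracket Z Y"
  using assms by (simp add: sbracket_def smul_add_left smul_add_right algebra_simps)

lemma sbracket_antisym: "sbracket Y X = - sbracket X Y"
  by (simp add: sbracket_def)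

lemma smul_zshift_right: "smul X (zshift m Y) = zshift m (smul X Y)"
  unfolding smul_def zshift_def by (simp add: algebra_simps)

lemma smul_zshift_left:
  fixes X Y :: "('r::comm_ring_1, 'n::finite) series"
  shows "smul (zshift m X) Y = zshift m (smul X Y)"
proof
  fix k
  show "smul (zshift m X) Y k = zshift m (smul X Y) k"
    unfolding smul_def zshift_def
    by (rule sum.reindex_bij_witness[where i="\<lambda>i. i + m" and j="\<lambda>i. i - m"])
       (auto simp: algebra_simps)
qed

lemma sbracket_zshift_right: "sbracket X (zshift m Y) = zshift m (sbracket X Y)"
  unfolding sbracket_def smul_zshift_left smul_zshift_right by (simp add: zshift_def fun_eq_iff)

lemma sbracket_zshift_left: "sbracket (zshift m X) Y = zshift m (sbracket X Y)"
  unfolding sbracket_def smul_zshift_left smul_zshift_right by (simp add: zshift_def fun_eq_iff)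

lemma smul_eq_sum_reindex:
  fixes Y Z :: "('r::comm_ring_1, 'n::finite) series"
  assumes "finite S" "\<And>j. Y (j - t) \<noteq> 0 \<Longrightarrow> Z (k + t - j) \<noteq> 0 \<Longrightarrow> j \<in> S"
  shows "smul Y Z k = (\<Sum>j\<in>S. Y (j - t) ** Z (k + t - j))"
proof -
  have "smul Y Z k = (\<Sum>i\<in>(\<lambda>j. j - t) ` S. Y i ** Z (k - i))"
    by (rule smul_eq_sum)
       (use assms in \<open>auto simp: smul_terms_def image_iff intro!: bexI[where x="_ + t"]\<close>)
  also have "\<dots> = (\<Sum>j\<in>S. Y (j - t) ** Z (k + t - j))"
    by (subst sum.reindex) (auto simp: inj_on_def algebra_simps)
  finally show ?thesis .
qed

lemma smul_assoc_deg_le: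
  fixes X Y Z :: "('r::comm_ring_1, 'n::finite) series"
  assumes X: "deg_le a X" and Y: "deg_le b Y" and Z: "deg_le c Z"
  shows "smul (smul X Y) Z = smul X (smul Y Z)"
proof
  fix k
  define I where "I = {k - b - c..a}"
  define J where "J = {k - c..a + b}"
  have I: "finite I" and J: "finite J" by (auto simp: I_def J_def)
  have "smul (smul X Y) Z k = (\<Sum>j\<in>J. smul X Y j ** Z (k - j))"
    by (rule smul_eq_sum[OF J])
       (use smul_terms_deg_le[OF deg_le_smul[OF X Y] Z] in \<open>auto simp: J_def\<close>)
  also have "\<dots> = (\<Sum>j\<in>J. \<Sum>i\<in>I. X i ** Y (j - i) ** Z (k - j))"
  proof (rule sum.cong[OF refl])
    fix j assume "j \<in> J"
    then have "smul X Y j = (\<Sum>i\<in>I. X i ** Y (j - i))"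
      by (intro smul_eq_sum[OF I])
         (use smul_terms_deg_le[OF X Y, of j] in \<open>auto simp: I_def J_def\<close>)
    then show "smul X Y j ** Z (k - j) = (\<Sum>i\<in>I. X i ** Y (j - i) ** Z (k - j))"
      by (simp add: matrix_sum_mult[OF I])
  qed
  also have "\<dots> = (\<Sum>i\<in>I. \<Sum>j\<in>J. X i ** Y (j - i) ** Z (k - j))"
    by (rule sum.swap)
  also have "\<dots> = (\<Sum>i\<in>I. X i ** smul Y Z (k - i))"
  proof (rule sum.cong[OF refl])
    fix i assume "i \<in> I"
    then have "smul Y Z (k - i) = (\<Sum>j\<in>J. Y (j - i) ** Z (k - i + i - j))"
      by (intro smul_eq_sum_reindex[OF J])
         (use Y Z in \<open>auto simp: deg_le_def I_def J_def not_less[symmetric]\<close>)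
    then show "(\<Sum>j\<in>J. X i ** Y (j - i) ** Z (k - j)) = X i ** smul Y Z (k - i)"
      by (simp add: matrix_mult_sum[OF J] matrix_mul_assoc)
  qed
  also have "\<dots> = smul X (smul Y Z) k"
    by (rule smul_eq_sum[OF I, symmetric])
       (use smul_terms_deg_le[OF X deg_le_smul[OF Y Z], of k] in \<open>auto simp: I_def\<close>)
  finally show "smul (smul X Y) Z k = smul X (smul Y Z) k" .
qed

lemma smul_smonom:
  fixes A B :: "'r::comm_ring_1^'n::finite^'n"
  shows "smul (smonom A p) (smonom B q) = smonom (A ** B) (p + q)"
proof
  fix k
  have "smul (smonom A p) (smonom B q) k = (\<Sum>i\<in>{p}. smonom A p i ** smonom B q (k - i))"
    by (rule smul_eq_sum) (auto simp: smul_terms_def smonom_def split: if_splits)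
  then show "smul (smonom A p) (smonom B q) k = smonom (A ** B) (p + q) k"
    by (auto simp: smonom_def)
qed

lemma smul_one_left:
  fixes Y :: "('r::comm_ring_1, 'n::finite) series"
  shows "smul (smonom (mat 1) 0) Y = Y"
proof
  fix k
  have "smul (smonom (mat 1) 0) Y k = (\<Sum>i\<in>{0}. smonom (mat 1) 0 i ** Y (k - i))"
    by (rule smul_eq_sum) (auto simp: smul_terms_def smonom_def split: if_splits)
  then show "smul (smonom (mat 1) 0) Y k = Y k" by (simp add: smonom_def)
qed

section \<open>The substitution \<open>z \<mapsto> z\<^sup>-\<^sup>1\<close>\<close>

definition zreflect :: "('r, 'n) series \<Rightarrow> ('r, 'n) series" where
  "zreflect X = (\<lambda>i. X (- i))"

lemma zreflect_zreflect [simp]: "zreflect (zreflect X) = X"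
  by (simp add: zreflect_def)

lemma zreflect_eq_iff: "zreflect X = zreflect Y \<longleftrightarrow> X = Y"
  by (metis zreflect_zreflect)

lemma zreflect_diff: "zreflect (X - Y) = zreflect X - zreflect Y"
  by (simp add: zreflect_def fun_eq_iff)

lemma zreflect_0: "zreflect 0 = 0"
  by (simp add: zreflect_def fun_eq_iff)

lemma zreflect_smonom: "zreflect (smonom A k) = smonom A (- k)"
  by (auto simp: zreflect_def smonom_def fun_eq_iff)

lemma zreflect_zshift: "zreflect (zshift m X) = zshift (- m) (zreflect X)"
  by (simp add: zreflect_def zshift_def fun_eq_iff)

lemma zreflect_sder: "zreflect (sder d X) = sder d (zreflect X)"
  by (simp add: zreflect_def sder_def fun_eq_iff)

lemma zreflect_smul:
  fixes X Y :: "('r::comm_ring_1, 'n::finite) series"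
  shows "zreflect (smul X Y) = smul (zreflect X) (zreflect Y)"
proof
  fix k
  show "zreflect (smul X Y) k = smul (zreflect X) (zreflect Y) k"
    unfolding smul_def zreflect_def
    by (rule sum.reindex_bij_witness[where i="\<lambda>i. - i" and j="\<lambda>i. - i"])
       (auto, metis add.commute diff_conv_add_uminus)
qed

lemma zreflect_sbracket: "zreflect (sbracket X Y) = sbracket (zreflect X) (zreflect Y)"
  by (simp add: sbracket_def zreflect_diff zreflect_smul)

lemma deg_le_zreflect_iff: "deg_le N (zreflect X) \<longleftrightarrow> ord_ge (- N) X"
  unfolding deg_le_def ord_ge_def zreflect_def by (metis minus_less_iff minus_minus)

text \<open>Truncations are taken at an arbitrary degree \<open>c\<close>: the substitution \<open>z \<mapsto> z\<^sup>-\<^sup>1\<close> turns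
  \<open>pi_lt0\<close> into truncation at degree 1 (\<open>zreflect_trunc_lt\<close>), and the splitting argument works
  for every \<open>0 \<le> c \<le> 1\<close>.\<close>

definition trunc_ge :: "int \<Rightarrow> ('r::zero, 'n::finite) series \<Rightarrow> ('r, 'n) series" where
  "trunc_ge c X = (\<lambda>i. if c \<le> i then X i else 0)"

definition trunc_lt :: "int \<Rightarrow> ('r::zero, 'n::finite) series \<Rightarrow> ('r, 'n) series" where
  "trunc_lt c X = (\<lambda>i. if i < c then X i else 0)"

lemma pi_ge0_eq_trunc_ge: "pi_ge0 = trunc_ge 0"
  by (simp add: pi_ge0_def trunc_ge_def fun_eq_iff)

lemma pi_lt0_eq_trunc_lt: "pi_lt0 = trunc_lt 0"
  by (simp add: pi_lt0_def trunc_lt_def fun_eq_iff)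

lemma zreflect_trunc_lt: "zreflect (trunc_lt c X) = trunc_ge (1 - c) (zreflect X)"
  by (auto simp: zreflect_def trunc_lt_def trunc_ge_def fun_eq_iff)

lemma trunc_ge_add_trunc_lt:
  fixes X :: "('r::monoid_add, 'n::finite) series"
  shows "trunc_ge c X + trunc_lt c X = X"
  by (simp add: trunc_ge_def trunc_lt_def fun_eq_iff)

lemma trunc_ge_diff:
  fixes X Y :: "('r::ab_group_add, 'n::finite) series"
  shows "trunc_ge c (X - Y) = trunc_ge c X - trunc_ge c Y"
  by (simp add: trunc_ge_def fun_eq_iff)

lemma trunc_lt_diff:
  fixes X Y :: "('r::ab_group_add, 'n::finite) series"
  shows "trunc_lt c (X - Y) = trunc_lt c X - trunc_lt c Y"
  by (simp add: trunc_lt_def fun_eq_iff)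

lemma trunc_ge_add:
  fixes X Y :: "('r::ab_group_add, 'n::finite) series"
  shows "trunc_ge c (X + Y) = trunc_ge c X + trunc_ge c Y"
  by (simp add: trunc_ge_def fun_eq_iff)

lemma zshift_diff: "zshift m (X - Y) = zshift m X - zshift m Y"
  by (simp add: zshift_def fun_eq_iff)

lemma zshift_0: "zshift m 0 = 0"
  by (simp add: zshift_def fun_eq_iff)

lemma sder_zshift: "sder d (zshift m X) = zshift m (sder d X)"
  by (simp add: sder_def zshift_def fun_eq_iff)

lemma sder_trunc_ge: "d 0 = 0 \<Longrightarrow> sder d (trunc_ge c X) = trunc_ge c (sder d X)"
  by (simp add: sder_def trunc_ge_def fun_eq_iff vec_eq_iff)

lemma sder_trunc_lt: "d 0 = 0 \<Longrightarrow> sder d (trunc_lt c X) = trunc_lt c (sder d X)"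
  by (simp add: sder_def trunc_lt_def fun_eq_iff vec_eq_iff)

lemma deg_le_trunc_ge: "deg_le N X \<Longrightarrow> deg_le N (trunc_ge c X)"
  by (simp add: deg_le_def trunc_ge_def)

lemma ord_ge_trunc_lt: "ord_ge N X \<Longrightarrow> ord_ge N (trunc_lt c X)"
  by (simp add: ord_ge_def trunc_lt_def)

lemma ord_ge_trunc_ge: "ord_ge c (trunc_ge c X)"
  by (simp add: ord_ge_def trunc_ge_def)

lemma deg_le_trunc_lt: "deg_le (c - 1) (trunc_lt c X)"
  by (simp add: deg_le_def trunc_lt_def)

lemma trunc_ge_eq_0: "deg_le (c - 1) X \<Longrightarrow> trunc_ge c X = 0"
  by (simp add: deg_le_def trunc_ge_def fun_eq_iff)

lemma trunc_ge_eq_self: "ord_ge c X \<Longrightarrow> trunc_ge c X = X"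
  by (simp add: ord_ge_def trunc_ge_def fun_eq_iff)

lemma trunc_lt_eq_0: "ord_ge c X \<Longrightarrow> trunc_lt c X = 0"
  by (simp add: ord_ge_def trunc_lt_def fun_eq_iff)

lemma trunc_ge_uminus:
  fixes X :: "('r::ab_group_add, 'n::finite) series"
  shows "trunc_ge c (- X) = - trunc_ge c X"
  by (simp add: trunc_ge_def fun_eq_iff)

lemma trunc_ge_eq_trunc_lt_imp_eq_0:
  "trunc_ge c X = trunc_lt c Y \<Longrightarrow> trunc_ge c X = 0 \<and> trunc_lt c Y = 0"
  by (simp add: trunc_ge_def trunc_lt_def fun_eq_iff) (metis not_less)

lemma sder_trunc_ge_zshift_split:
  fixes U B :: "('r::comm_ring_1, 'n::finite) series"
  assumes "d 0 = 0"
  shows "sder d (trunc_ge c (zshift m U))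
    = trunc_ge c (zshift m (sder d U - sbracket B U)) + trunc_ge c (sbracket B (zshift m U))"
  using assms by (simp add: sder_trunc_ge sder_zshift sbracket_zshift_right trunc_ge_diff zshift_diff)

lemma sder_trunc_lt_zshift_split:
  fixes U B :: "('r::comm_ring_1, 'n::finite) series"
  assumes "d 0 = 0"
  shows "sder d (trunc_lt c (zshift m U))
    = trunc_lt c (zshift m (sder d U - sbracket B U)) + trunc_lt c (sbracket B (zshift m U))"
  using assms by (simp add: sder_trunc_lt sder_zshift sbracket_zshift_right trunc_lt_diff zshift_diff)

section \<open>Flows from zero-curvature equations\<close>

lemma trunc_ge_sbracket_splitting:
  fixes L1 L2 :: "('r::comm_ring_1, 'n::finite) series"
  assumes L1: "deg_le N1 L1" and L2: "deg_le N2 L2" and comm: "sbracket L1 L2 = 0"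
    and c: "0 \<le> c" "c \<le> 1"
  shows "trunc_ge c (sbracket (trunc_ge c L1) L2) + trunc_ge c (sbracket L1 (trunc_ge c L2))
       = sbracket (trunc_ge c L1) (trunc_ge c L2)"
proof -
  define B1 B2 P1 P2 where "B1 = trunc_ge c L1" and "B2 = trunc_ge c L2"
    and "P1 = trunc_lt c L1" and "P2 = trunc_lt c L2"
  have L: "L1 = B1 + P1" "L2 = B2 + P2"
    by (simp_all add: B1_def B2_def P1_def P2_def trunc_ge_add_trunc_lt)
  have deg: "deg_le N1 B1" "deg_le N2 B2" "deg_le (c - 1) P1" "deg_le (c - 1) P2"
    using L1 L2 by (simp_all add: B1_def B2_def P1_def P2_def deg_le_trunc_ge deg_le_trunc_lt)
  have fin: "smul_finite X Y" if "X \<in> {B1, B2, P1, P2}" "Y \<in> {B1, B2, P1, P2}" for X Y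
    using that deg by (auto intro: smul_finite_deg_le)
  have L1_B2: "sbracket L1 B2 = sbracket B1 B2 + sbracket P1 B2"
    unfolding L by (rule sbracket_add_left) (simp_all add: fin)
  have P1_L2: "sbracket P1 L2 = sbracket P1 B2 + sbracket P1 P2"
    unfolding L by (rule sbracket_add_right) (simp_all add: fin)
  have L1_L2: "sbracket L1 L2 = sbracket B1 L2 + sbracket P1 L2"
    using deg L2 unfolding L(1) by (intro sbracket_add_left) (auto intro: smul_finite_deg_le)
  have "sbracket B1 L2 + sbracket L1 B2 = sbracket L1 L2 + sbracket B1 B2 - sbracket P1 P2"
    unfolding L1_L2 L1_B2 P1_L2 by (simp add: algebra_simps)
  then have sum: "sbracket B1 L2 + sbracket L1 B2 = sbracket B1 B2 - sbracket P1 P2"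
    by (simp add: comm)
  have B1_B2: "trunc_ge c (sbracket B1 B2) = sbracket B1 B2"
  proof (rule trunc_ge_eq_self)
    have "ord_ge (c + c) (sbracket B1 B2)"
      unfolding B1_def B2_def by (intro ord_ge_sbracket ord_ge_trunc_ge)
    then show "ord_ge c (sbracket B1 B2)" using c by (auto elim: ord_ge_mono)
  qed
  have P1_P2: "trunc_ge c (sbracket P1 P2) = 0"
    using deg_le_sbracket[OF deg(3,4)] c by (intro trunc_ge_eq_0) (auto elim: deg_le_mono)
  show ?thesis
    unfolding B1_def[symmetric] B2_def[symmetric] trunc_ge_add[symmetric] sum trunc_ge_diff
      B1_B2 P1_P2 by simp
qed

lemma deg_le_flow_defect:
  fixes U1 U2 :: "('r::comm_ring_1, 'n::finite) series"
  assumes d: "d 0 = 0" and U1: "deg_le N U1" and U2: "deg_le N U2"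
    and comm: "sbracket U1 U2 = 0" and c: "c \<le> 1"
  shows "deg_le N (sder d U2 - sbracket (trunc_ge c (zshift m U1)) U2)"
proof -
  define B P where "B = trunc_ge c (zshift m U1)" and "P = trunc_lt c (zshift m U1)"
  have deg: "deg_le (N + m) B" "deg_le (c - 1) P"
    using deg_le_zshift[OF U1] by (simp_all add: B_def P_def deg_le_trunc_ge deg_le_trunc_lt)
  have "sbracket B U2 + sbracket P U2 = sbracket (B + P) U2"
    using deg U2 by (intro sbracket_add_left[symmetric]) (auto intro: smul_finite_deg_le)
  also have "\<dots> = 0"
    by (simp add: B_def P_def trunc_ge_add_trunc_lt sbracket_zshift_left comm zshift_0)
  finally have "sbracket B U2 = sbracket U2 P"
    by (simp add: sbracket_antisym[of P] add_eq_0_iff2)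
  moreover have "deg_le N (sbracket U2 P)"
    using deg_le_sbracket[OF U2 deg(2)] c by (auto elim: deg_le_mono)
  ultimately show ?thesis
    unfolding B_def[symmetric] using deg_le_sder[where d=d, OF d U2] by (simp add: deg_le_diff)
qed

lemma zero_curvature_swap:
  fixes U1 U2 :: "('r::comm_ring_1, 'n::finite) series"
  assumes da: "da 0 = 0" and db: "db 0 = 0" and U1: "deg_le N U1" and U2: "deg_le N U2"
    and comm: "sbracket U1 U2 = 0" and c: "0 \<le> c" "c \<le> 1"
    and zc: "sder da (trunc_ge c (zshift m2 U2)) - sder db (trunc_ge c (zshift m1 U1))
      - sbracket (trunc_ge c (zshift m1 U1)) (trunc_ge c (zshift m2 U2)) = 0"
  shows "trunc_ge c (zshift m2 (sder da U2 - sbracket (trunc_ge c (zshift m1 U1)) U2))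
       = trunc_ge c (zshift m1 (sder db U1 - sbracket (trunc_ge c (zshift m2 U2)) U1))"
proof -
  define L1 L2 where "L1 = zshift m1 U1" and "L2 = zshift m2 U2"
  define B1 B2 where "B1 = trunc_ge c L1" and "B2 = trunc_ge c L2"
  have split: "trunc_ge c (sbracket B1 L2) + trunc_ge c (sbracket L1 B2) = sbracket B1 B2"
    unfolding B1_def B2_def L1_def L2_def
    by (rule trunc_ge_sbracket_splitting[OF deg_le_zshift[OF U1] deg_le_zshift[OF U2] _ c])
       (simp add: sbracket_zshift_left sbracket_zshift_right comm zshift_0)
  have da_B2: "sder da B2
      = trunc_ge c (zshift m2 (sder da U2 - sbracket B1 U2)) + trunc_ge c (sbracket B1 L2)"
    unfolding B2_def L2_def by (rule sder_trunc_ge_zshift_split[where d = da, OF da])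
  have db_B1: "sder db B1
      = trunc_ge c (zshift m1 (sder db U1 - sbracket B2 U1)) - trunc_ge c (sbracket L1 B2)"
    unfolding B1_def L1_def
    by (subst sder_trunc_ge_zshift_split[where d = db and B = B2, OF db])
       (simp add: sbracket_antisym[of B2 "zshift m1 U1"] trunc_ge_uminus)
  have "sder da B2 - sder db B1 - sbracket B1 B2 = 0"
    using zc by (simp add: B1_def B2_def L1_def L2_def)
  then show ?thesis
    unfolding da_B2 db_B1 split[symmetric] by (simp add: B1_def B2_def L1_def L2_def algebra_simps)
qed

lemma flow_deg_le_from_zero_curvature:
  fixes U1 U2 :: "('r::comm_ring_1, 'n::finite) series"
  assumes d: "d 0 = 0" and dd: "\<And>p. dd p 0 = 0"
    and U1: "deg_le N U1" and U2: "deg_le N U2" and comm: "sbracket U1 U2 = 0"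
    and c: "0 \<le> c" "c \<le> 1"
    and zc: "\<And>p. 0 \<le> p \<Longrightarrow>
      sder d (trunc_ge c (zshift p U2)) - sder (dd p) (trunc_ge c (zshift m U1))
      - sbracket (trunc_ge c (zshift m U1)) (trunc_ge c (zshift p U2)) = 0"
  shows "sder d U2 = sbracket (trunc_ge c (zshift m U1)) U2"
proof -
  have comm': "sbracket U2 U1 = 0"
    using comm by (simp add: sbracket_antisym[of U2])
  have "(sder d U2 - sbracket (trunc_ge c (zshift m U1)) U2) k = 0" for k
  proof -
    \<comment> \<open>\<open>p\<close> is so large that coefficient \<open>k\<close> of the defect is a coefficient of the swapped
      defect beyond its degree bound \<open>N\<close>.\<close>
    define p where "p = max 0 (max (c - k) (N + m - k + 1))"
    have p: "0 \<le> p" "c \<le> k + p" "N < k + p - m"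
      unfolding p_def by linarith+
    let ?Z = "sder (dd p) U1 - sbracket (trunc_ge c (zshift p U2)) U1"
    have "trunc_ge c (zshift p (sder d U2 - sbracket (trunc_ge c (zshift m U1)) U2))
        = trunc_ge c (zshift m ?Z)"
      by (rule zero_curvature_swap[OF d dd U1 U2 comm c zc[OF p(1)]])
    from fun_cong[OF this, of "k + p"]
    have "(sder d U2 - sbracket (trunc_ge c (zshift m U1)) U2) k = ?Z (k + p - m)"
      by (simp add: trunc_ge_def zshift_def p(2))
    also have "\<dots> = 0"
      using deg_le_flow_defect[where d = "dd p", OF dd U2 U1 comm' c(2)]
      by (simp add: deg_le_def p(3))
    finally show ?thesis .
  qed
  then show ?thesis
    by (simp add: fun_eq_iff)
qed

lemma flow_ord_ge_from_zero_curvature: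
  fixes W1 W2 :: "('r::comm_ring_1, 'n::finite) series"
  assumes d: "d 0 = 0" and dd: "\<And>p. dd p 0 = 0"
    and W1: "ord_ge N W1" and W2: "ord_ge N W2" and comm: "sbracket W1 W2 = 0"
    and zc: "\<And>p. p < 0 \<Longrightarrow>
      sder d (trunc_lt 0 (zshift (p + 1) W2)) - sder (dd p) (trunc_lt 0 (zshift (m + 1) W1))
      - sbracket (trunc_lt 0 (zshift (m + 1) W1)) (trunc_lt 0 (zshift (p + 1) W2)) = 0"
  shows "sder d W2 = sbracket (trunc_lt 0 (zshift (m + 1) W1)) W2"
proof -
  note zreflect_simps = zreflect_diff zreflect_sder zreflect_sbracket zreflect_trunc_lt
    zreflect_zshift minus_minus diff_zero
  have "sder d (zreflect W2)
      = sbracket (trunc_ge 1 (zshift (- (m + 1)) (zreflect W1))) (zreflect W2)"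
  proof (rule flow_deg_le_from_zero_curvature[where dd = "\<lambda>p. dd (- p - 1)" and N = "- N"])
    fix p :: int assume "0 \<le> p"
    then have "zreflect (sder d (trunc_lt 0 (zshift (- p) W2))
        - sder (dd (- p - 1)) (trunc_lt 0 (zshift (m + 1) W1))
        - sbracket (trunc_lt 0 (zshift (m + 1) W1)) (trunc_lt 0 (zshift (- p) W2))) = 0"
      using zc[of "- p - 1"] by (simp add: zreflect_0)
    then show "sder d (trunc_ge 1 (zshift p (zreflect W2)))
        - sder (dd (- p - 1)) (trunc_ge 1 (zshift (- (m + 1)) (zreflect W1)))
        - sbracket (trunc_ge 1 (zshift (- (m + 1)) (zreflect W1)))
            (trunc_ge 1 (zshift p (zreflect W2))) = 0"
      by (simp only: zreflect_simps)
  next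
    show "sbracket (zreflect W1) (zreflect W2) = 0"
      using arg_cong[OF comm, of zreflect] by (simp only: zreflect_sbracket zreflect_0)
  qed (use d dd W1 W2 in \<open>simp_all add: deg_le_zreflect_iff\<close>)
  then have "zreflect (sder d W2) = zreflect (sbracket (trunc_lt 0 (zshift (m + 1) W1)) W2)"
    by (simp only: zreflect_simps)
  then show ?thesis
    by (simp only: zreflect_eq_iff)
qed

lemma mixed_zero_curvature:
  fixes U W :: "('r::comm_ring_1, 'n::finite) series"
  assumes da: "da 0 = 0" and db: "db 0 = 0" and U: "deg_le N U" and W: "ord_ge M W"
    and zc: "sder da (trunc_ge 0 (zshift p U)) - sder db (trunc_lt 0 (zshift q W))
      - sbracket (trunc_lt 0 (zshift q W)) (trunc_ge 0 (zshift p U)) = 0"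
  shows "trunc_ge 0 (zshift p (sder da U - sbracket (trunc_lt 0 (zshift q W)) U)) = 0"
    and "trunc_lt 0 (zshift q (sder db W - sbracket (trunc_ge 0 (zshift p U)) W)) = 0"
proof -
  define B C where "B = trunc_ge 0 (zshift p U)" and "C = trunc_lt 0 (zshift q W)"
  have "sder da B
      = trunc_ge 0 (zshift p (sder da U - sbracket C U)) + trunc_ge 0 (sbracket C (zshift p U))"
    unfolding B_def by (rule sder_trunc_ge_zshift_split[where d = da, OF da])
  also have "trunc_ge 0 (sbracket C (zshift p U)) = trunc_ge 0 (sbracket C B)"
  proof -
    have deg: "deg_le (N + p) B" "deg_le (-1) C" "deg_le (-1) (trunc_lt 0 (zshift p U))"
      using deg_le_zshift[OF U] deg_le_trunc_lt[of 0]
      by (simp_all add: B_def C_def deg_le_trunc_ge)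
    have "sbracket C (zshift p U) = sbracket C B + sbracket C (trunc_lt 0 (zshift p U))"
      unfolding B_def using deg
      by (subst trunc_ge_add_trunc_lt[where c = 0 and X = "zshift p U", symmetric],
          intro sbracket_add_right) (auto simp: B_def intro: smul_finite_deg_le)
    moreover have "trunc_ge 0 (sbracket C (trunc_lt 0 (zshift p U))) = 0"
      using deg_le_sbracket[OF deg(2,3)] by (intro trunc_ge_eq_0) (auto elim: deg_le_mono)
    ultimately show ?thesis
      by (simp add: trunc_ge_add)
  qed
  finally have da_B: "sder da B
      = trunc_ge 0 (zshift p (sder da U - sbracket C U)) + trunc_ge 0 (sbracket C B)" .
  have "sder db C
      = trunc_lt 0 (zshift q (sder db W - sbracket B W)) + trunc_lt 0 (sbracket B (zshift q W))"
    unfolding C_def by (rule sder_trunc_lt_zshift_split[where d = db, OF db])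
  also have "trunc_lt 0 (sbracket B (zshift q W)) = - trunc_lt 0 (sbracket C B)"
  proof -
    have ord: "ord_ge 0 B" "ord_ge (M + q) C" "ord_ge 0 (trunc_ge 0 (zshift q W))"
      using ord_ge_zshift[OF W] by (simp_all add: B_def C_def ord_ge_trunc_ge ord_ge_trunc_lt)
    have "sbracket B (zshift q W) = sbracket B (trunc_ge 0 (zshift q W)) + sbracket B C"
      unfolding C_def using ord
      by (subst trunc_ge_add_trunc_lt[where c = 0 and X = "zshift q W", symmetric],
          intro sbracket_add_right) (auto simp: C_def intro: smul_finite_ord_ge)
    moreover have "trunc_lt 0 (sbracket B (trunc_ge 0 (zshift q W))) = 0"
      using ord_ge_sbracket[OF ord(1,3)] by (intro trunc_lt_eq_0) simp
    ultimately show ?thesis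
      by (simp add: trunc_lt_diff sbracket_antisym[of B C])
  qed
  finally have db_C: "sder db C
      = trunc_lt 0 (zshift q (sder db W - sbracket B W)) - trunc_lt 0 (sbracket C B)"
    by (simp only: diff_conv_add_uminus)
  have "sder da B - sder db C - sbracket C B = 0"
    using zc by (simp add: B_def C_def)
  then have "trunc_ge 0 (zshift p (sder da U - sbracket C U))
      = trunc_lt 0 (zshift q (sder db W - sbracket B W))"
    unfolding da_B db_C
    by (subst (asm) (3) trunc_ge_add_trunc_lt[where c = 0, symmetric]) (simp add: algebra_simps)
  from trunc_ge_eq_trunc_lt_imp_eq_0[OF this] show
    "trunc_ge 0 (zshift p (sder da U - sbracket (trunc_lt 0 (zshift q W)) U)) = 0"
    "trunc_lt 0 (zshift q (sder db W - sbracket (trunc_ge 0 (zshift p U)) W)) = 0"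
    by (simp_all add: B_def C_def)
qed

lemma eq_0_if_trunc_ge_zshift_eq_0:
  assumes "\<And>p. 0 \<le> p \<Longrightarrow> trunc_ge 0 (zshift p X) = 0"
  shows "X = 0"
proof
  fix k
  show "X k = 0 k"
    using fun_cong[OF assms[of "\<bar>k\<bar>"], of "k + \<bar>k\<bar>"]
    by (simp add: trunc_ge_def zshift_def split: if_splits)
qed

lemma eq_0_if_trunc_lt_zshift_eq_0:
  assumes "\<And>q. q \<le> 0 \<Longrightarrow> trunc_lt 0 (zshift q X) = 0"
  shows "X = 0"
proof
  fix k
  show "X k = 0 k"
    using fun_cong[OF assms[of "- \<bar>k\<bar> - 1"], of "k - \<bar>k\<bar> - 1"] abs_ge_self[of k]
    by (auto simp: trunc_lt_def zshift_def algebra_simps split: if_splits)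
qed

lemma flow_ord_ge_from_mixed_zero_curvature:
  fixes U W :: "('r::comm_ring_1, 'n::finite) series"
  assumes d: "d 0 = 0" and dd: "\<And>q. dd q 0 = 0" and U: "deg_le N U" and W: "ord_ge M W"
    and zc: "\<And>q. q < 0 \<Longrightarrow>
      sder (dd q) (trunc_ge 0 (zshift m U)) - sder d (trunc_lt 0 (zshift (q + 1) W))
      - sbracket (trunc_lt 0 (zshift (q + 1) W)) (trunc_ge 0 (zshift m U)) = 0"
  shows "sder d W = sbracket (trunc_ge 0 (zshift m U)) W"
proof -
  have "sder d W - sbracket (trunc_ge 0 (zshift m U)) W = 0"
  proof (rule eq_0_if_trunc_lt_zshift_eq_0)
    fix q :: int assume "q \<le> 0"
    then show "trunc_lt 0 (zshift q (sder d W - sbracket (trunc_ge 0 (zshift m U)) W)) = 0"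
      using mixed_zero_curvature(2)[OF dd d U W zc[of "q - 1"]] by simp
  qed
  then show ?thesis
    by simp
qed

lemma flow_deg_le_from_mixed_zero_curvature:
  fixes U W :: "('r::comm_ring_1, 'n::finite) series"
  assumes d: "d 0 = 0" and dd: "\<And>p. dd p 0 = 0" and U: "deg_le N U" and W: "ord_ge M W"
    and zc: "\<And>p. 0 \<le> p \<Longrightarrow>
      sder d (trunc_ge 0 (zshift p U)) - sder (dd p) (trunc_lt 0 (zshift q W))
      - sbracket (trunc_lt 0 (zshift q W)) (trunc_ge 0 (zshift p U)) = 0"
  shows "sder d U = sbracket (trunc_lt 0 (zshift q W)) U"
proof -
  have "sder d U - sbracket (trunc_lt 0 (zshift q W)) U = 0"
    by (rule eq_0_if_trunc_ge_zshift_eq_0, rule mixed_zero_curvature(1)[OF d dd U W zc])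
  then show ?thesis
    by simp
qed

section \<open>The combined hierarchy\<close>

lemma calg_hom_sum:
  assumes "calg_hom emb" "finite S"
  shows "emb (\<Sum>k\<in>S. f k) = (\<Sum>k\<in>S. emb (f k))"
proof -
  have add: "\<And>a b. emb (a + b) = emb a + emb b"
    using assms(1) by (simp add: calg_hom_def)
  then have zero: "emb 0 = 0"
    by (metis add_cancel_right_right)
  show ?thesis
    using assms(2) by (induction S rule: finite_induct) (simp_all add: add zero)
qed

lemma embm_mult:
  fixes A B :: "complex^'n::finite^'n" and emb :: "complex \<Rightarrow> 'r::comm_ring_1"
  assumes "calg_hom emb"
  shows "embm emb (A ** B) = embm emb A ** embm emb B"
  using assms unfolding embm_def matrix_matrix_mult_def
  by (simp add: vec_eq_iff calg_hom_sum calg_hom_def)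

lemma commuting_C_derivations_zero:
  assumes "commuting_C_derivations emb r D" "a \<in> {1..r}"
  shows "D m a 0 = 0"
proof -
  have "D m a (0 + 0) = D m a 0 + D m a 0"
    using assms unfolding commuting_C_derivations_def by blast
  then show ?thesis by simp
qed

lemma sbracket_conjugates_deg_le:
  fixes g h :: "('r::comm_ring_1, 'n::finite) series"
  assumes g: "deg_le p g" and h: "deg_le q h" and hg: "smul h g = smonom (mat 1) 0"
    and AB: "A ** B = B ** A"
  shows "sbracket (smul (smul g (smonom A k)) h) (smul (smul g (smonom B k)) h) = 0"
proof -
  have conj_mult: "smul (smul (smul g (smonom C k)) h) (smul (smul g (smonom C' k)) h)
      = smul (smul g (smonom (C ** C') (k + k))) h" for C C'
  proof -
    let ?G = "smul g (smonom C k)" and ?G' = "smul g (smonom C' k)"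
    have deg: "deg_le (p + k) ?G" "deg_le (p + k) ?G'"
      using g by (simp_all add: deg_le_smul deg_le_smonom)
    have "smul (smul ?G h) (smul ?G' h) = smul ?G (smul h (smul ?G' h))"
      by (rule smul_assoc_deg_le[OF deg(1) h deg_le_smul[OF deg(2) h]])
    also have "smul h (smul ?G' h) = smul (smul h ?G') h"
      by (rule smul_assoc_deg_le[OF h deg(2) h, symmetric])
    also have "smul h ?G' = smonom C' k"
      by (simp add: smul_assoc_deg_le[OF h g deg_le_smonom, symmetric] hg smul_one_left)
    also have "smul ?G (smul (smonom C' k) h) = smul (smul ?G (smonom C' k)) h"
      by (rule smul_assoc_deg_le[OF deg(1) deg_le_smonom h, symmetric])
    also have "smul ?G (smonom C' k) = smul g (smonom (C ** C') (k + k))"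
      by (simp add: smul_assoc_deg_le[OF g deg_le_smonom deg_le_smonom] smul_smonom)
    finally show ?thesis .
  qed
  show ?thesis
    by (simp add: sbracket_def conj_mult AB)
qed

lemma sbracket_conjugates_ord_ge:
  fixes g h :: "('r::comm_ring_1, 'n::finite) series"
  assumes g: "ord_ge p g" and h: "ord_ge q h" and hg: "smul h g = smonom (mat 1) 0"
    and AB: "A ** B = B ** A"
  shows "sbracket (smul (smul g (smonom A k)) h) (smul (smul g (smonom B k)) h) = 0"
proof -
  have "sbracket (smul (smul (zreflect g) (smonom A (- k))) (zreflect h))
      (smul (smul (zreflect g) (smonom B (- k))) (zreflect h)) = 0"
    using g h arg_cong[OF hg, of zreflect]
    by (intro sbracket_conjugates_deg_le[where p = "- p" and q = "- q", OF _ _ _ AB])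
       (simp_all add: deg_le_zreflect_iff zreflect_smul zreflect_smonom)
  then have "zreflect (sbracket (smul (smul g (smonom A k)) h) (smul (smul g (smonom B k)) h))
      = zreflect 0"
    by (simp only: zreflect_sbracket zreflect_smul zreflect_smonom zreflect_0)
  then show ?thesis
    by (simp only: zreflect_eq_iff)
qed

theorem proposition3p2:
  fixes emb :: "complex \<Rightarrow> 'r::comm_ring_1"
    and D :: "int \<Rightarrow> nat \<Rightarrow> 'r \<Rightarrow> 'r"
    and r :: nat
    and E :: "nat \<Rightarrow> complex^'n::finite^'n"
    and g ginv X Xinv :: "('r, 'n) series"
    and U W :: "nat \<Rightarrow> ('r, 'n) series"
  assumes alg: "calg_hom emb"
    and der: "commuting_C_derivations emb r D"
    and t: "max_comm_basis r E"
    and g: "G_lt0 g" "bdd_above_series ginv"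
           "smul g ginv = smonom (mat 1) 0" "smul ginv g = smonom (mat 1) 0"
    and X: "G_ge0 X" "bdd_below_series Xinv"
           "smul X Xinv = smonom (mat 1) 0" "smul Xinv X = smonom (mat 1) 0"
    and U: "\<And>a. a \<in> {1..r} \<Longrightarrow> U a = smul (smul g (smonom (embm emb (E a)) 0)) ginv"
    and W: "\<And>b. b \<in> {1..r} \<Longrightarrow> W b = smul (smul X (smonom (embm emb (E b)) (-1))) Xinv"
    and zc1: "\<And>m1 m2 b1 a2. m1 < 0 \<Longrightarrow> 0 \<le> m2 \<Longrightarrow> b1 \<in> {1..r} \<Longrightarrow> a2 \<in> {1..r} \<Longrightarrow>
       sder (D m1 b1) (Bop U m2 a2) - sder (D m2 a2) (Cop W m1 b1)
         - sbracket (Cop W m1 b1) (Bop U m2 a2) = 0"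
    and zc2: "\<And>m1 m2 a1 a2. 0 \<le> m1 \<Longrightarrow> 0 \<le> m2 \<Longrightarrow> a1 \<in> {1..r} \<Longrightarrow> a2 \<in> {1..r} \<Longrightarrow>
       sder (D m1 a1) (Bop U m2 a2) - sder (D m2 a2) (Bop U m1 a1)
         - sbracket (Bop U m1 a1) (Bop U m2 a2) = 0"
    and zc3: "\<And>m1 m2 b1 b2. m1 < 0 \<Longrightarrow> m2 < 0 \<Longrightarrow> b1 \<in> {1..r} \<Longrightarrow> b2 \<in> {1..r} \<Longrightarrow>
       sder (D m1 b1) (Cop W m2 b2) - sder (D m2 b2) (Cop W m1 b1)
         - sbracket (Cop W m1 b1) (Cop W m2 b2) = 0"
  shows "combined_solution r D U W"
proof -
  note D0 = commuting_C_derivations_zero[OF der]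
  note zc = zc1 zc2 zc3
  note zc_trunc = zc[unfolded Bop_def Cop_def pi_ge0_eq_trunc_ge pi_lt0_eq_trunc_lt]
  obtain Ng Nx where ginv: "deg_le Ng ginv" and Xinv: "ord_ge Nx Xinv"
    using g(2) X(2) by (auto simp: bdd_above_series_def bdd_below_series_def deg_le_def ord_ge_def)
  have g_deg: "deg_le 0 g" and X_ord: "ord_ge 0 X"
    using g(1) X(1) by (auto simp: G_lt0_def G_ge0_def deg_le_def ord_ge_def)
  have E_comm: "embm emb (E a) ** embm emb (E b) = embm emb (E b) ** embm emb (E a)"
    if "a \<in> {1..r}" "b \<in> {1..r}" for a b
    using t that by (simp add: embm_mult[OF alg, symmetric] max_comm_basis_def)
  have U_deg: "deg_le Ng (U a)" if "a \<in> {1..r}" for a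
    using deg_le_smul[OF deg_le_smul[OF g_deg deg_le_smonom[where k = 0]] ginv] U[OF that] by simp
  have W_ord: "ord_ge (Nx - 1) (W b)" if "b \<in> {1..r}" for b
    using ord_ge_smul[OF ord_ge_smul[OF X_ord ord_ge_smonom[where k = "- 1"]] Xinv] W[OF that] by simp
  have U_comm: "sbracket (U a) (U b) = 0" if "a \<in> {1..r}" "b \<in> {1..r}" for a b
    unfolding U[OF that(1)] U[OF that(2)]
    by (rule sbracket_conjugates_deg_le[OF g_deg ginv g(4) E_comm[OF that]])
  have W_comm: "sbracket (W a) (W b) = 0" if "a \<in> {1..r}" "b \<in> {1..r}" for a b
    unfolding W[OF that(1)] W[OF that(2)]
    by (rule sbracket_conjugates_ord_ge[OF X_ord Xinv X(4) E_comm[OF that]])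
  show ?thesis
    unfolding combined_solution_def pi_ge0_eq_trunc_ge pi_lt0_eq_trunc_lt
  proof (intro conjI allI impI ballI)
    fix m :: int and a1 a2 assume m: "0 \<le> m" and a: "a1 \<in> {1..r}" "a2 \<in> {1..r}"
    show "sder (D m a1) (U a2) = sbracket (trunc_ge 0 (zshift m (U a1))) (U a2)"
      by (rule flow_deg_le_from_zero_curvature[where d = "D m a1" and dd = "\<lambda>p. D p a2",
            OF D0[OF a(1)] D0[OF a(2)] U_deg[OF a(1)] U_deg[OF a(2)] U_comm[OF a]])
         (simp_all add: zc_trunc(2)[OF m _ a])
  next
    fix m :: int and a b assume m: "0 \<le> m" and a: "a \<in> {1..r}" and b: "b \<in> {1..r}"
    show "sder (D m a) (W b) = sbracket (trunc_ge 0 (zshift m (U a))) (W b)"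
      by (rule flow_ord_ge_from_mixed_zero_curvature[where d = "D m a" and dd = "\<lambda>q. D q b",
            OF D0[OF a] D0[OF b] U_deg[OF a] W_ord[OF b]])
         (simp add: zc_trunc(1)[OF _ m b a])
  next
    fix m :: int and b1 b2 assume m: "m < 0" and b: "b1 \<in> {1..r}" "b2 \<in> {1..r}"
    show "sder (D m b1) (W b2) = sbracket (trunc_lt 0 (zshift (m + 1) (W b1))) (W b2)"
      by (rule flow_ord_ge_from_zero_curvature[where d = "D m b1" and dd = "\<lambda>p. D p b2",
            OF D0[OF b(1)] D0[OF b(2)] W_ord[OF b(1)] W_ord[OF b(2)] W_comm[OF b]])
         (simp add: zc_trunc(3)[OF m _ b])
  next
    fix m :: int and b a assume m: "m < 0" and b: "b \<in> {1..r}" and a: "a \<in> {1..r}"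
    show "sder (D m b) (U a) = sbracket (trunc_lt 0 (zshift (m + 1) (W b))) (U a)"
      by (rule flow_deg_le_from_mixed_zero_curvature[where d = "D m b" and dd = "\<lambda>p. D p a",
            OF D0[OF b] D0[OF a] U_deg[OF a] W_ord[OF b]])
         (simp add: zc_trunc(1)[OF m _ b a])
  qed
qed

end
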